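(* Let $n\ge1$ and let $\rho:\mathsf{Ch}_n\to\mathcal M_N(\mathbb T)$ be a representation of $\mathsf{Ch}_n=\langle a_1,\dots,a_n\rangle$. For every $\ell\in\{1,\dots,n\}$, the assignment on generators of $\mathsf{Ch}_{n+1}=\langle a_1,\dots,a_{n+1}\rangle$ $$\rho_\ell(a_j)=\begin{cases}\rho(a_j)& \text{if } j\le \ell,\\ \rho(a_{j-1})&\text{otherwise},\end{cases}\qquad j=1,\dots,n+1,$$ extends to a well-defined representation $\rho_\ell:\mathsf{Ch}_{n+1}\to\mathcal M_N(\mathbb T)$.
   Context: The Chinese monoid of rank $m$ is the monoid $\mathsf{Ch}_m=\langle a_1,\dots,a_m\rangle$ presented by the relations $a_ja_ka_i=a_ka_ja_i=a_ka_ia_j$ for all $1\le i\le j\le k\le m$. $\mathbb T=\mathbb R\cup\{-\infty\}$ is the max-plus semiring (addition $\max$, multiplication $+$), and $\mathcal M_N(\mathbb T)$ the monoid of $N\times N$ matrices over it with the induced product. A representation of a monoid $\mathcal S$ is a monoid homomorphism $\mathcal S\to\mathcal M_N(\mathbb T)$. *)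

theory Defs
  imports Complex_Main
begin

datatype trop = NegInf | Fin real

fun tplus :: "trop \<Rightarrow> trop \<Rightarrow> trop" where
  "tplus NegInf y = y"
| "tplus x NegInf = x"
| "tplus (Fin a) (Fin b) = Fin (max a b)"

fun ttimes :: "trop \<Rightarrow> trop \<Rightarrow> trop" where
  "ttimes (Fin a) (Fin b) = Fin (a + b)"
| "ttimes _ _ = NegInf"

text \<open>Tropical addition (max) makes trop a commutative monoid with neutral -\<infinity>,
  so that finite tropical sums can be written with the library sum operator.\<close>

instantiation trop :: comm_monoid_add
begin
definition zero_trop_def: "0 = NegInf"
definition plus_trop_def: "x + y = tplus x y"
instance
proof
  fix a b c :: trop
  show "a + b + c = a + (b + c)"
    unfolding plus_trop_def by (cases a; cases b; cases c) auto
  show "a + b = b + a"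
    unfolding plus_trop_def by (cases a; cases b) auto
  show "0 + a = a"
    unfolding plus_trop_def zero_trop_def by (cases a) auto
qed
end

section \<open>Max-plus matrices M_N(T), N given by a finite index type\<close>

type_synonym 'n tmat = "'n \<Rightarrow> 'n \<Rightarrow> trop"

definition tmat_mult :: "'n::finite tmat \<Rightarrow> 'n tmat \<Rightarrow> 'n tmat" where
  "tmat_mult A B = (\<lambda>i k. \<Sum>j\<in>UNIV. ttimes (A i j) (B j k))"

definition tmat_one :: "'n::finite tmat" where
  "tmat_one = (\<lambda>i j. if i = j then Fin 0 else NegInf)"

text \<open>Words over the generators a_1,...,a_m are lists of indices in {1..m}.
  chinese_cong m is the congruence on words generated by the defining relations
  a_j a_k a_i = a_k a_j a_i = a_k a_i a_j for 1 \<le> i \<le> j \<le> k \<le> m.\<close>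

inductive chinese_cong :: "nat \<Rightarrow> nat list \<Rightarrow> nat list \<Rightarrow> bool" for m :: nat where
  refl: "chinese_cong m u u"
| sym: "chinese_cong m u v \<Longrightarrow> chinese_cong m v u"
| trans: "chinese_cong m u v \<Longrightarrow> chinese_cong m v w \<Longrightarrow> chinese_cong m u w"
| rel1: "1 \<le> i \<Longrightarrow> i \<le> j \<Longrightarrow> j \<le> k \<Longrightarrow> k \<le> m \<Longrightarrow>
         chinese_cong m (u @ [j, k, i] @ v) (u @ [k, j, i] @ v)"
| rel2: "1 \<le> i \<Longrightarrow> i \<le> j \<Longrightarrow> j \<le> k \<Longrightarrow> k \<le> m \<Longrightarrow>
         chinese_cong m (u @ [k, j, i] @ v) (u @ [k, i, j] @ v)"

text \<open>A representation of Ch_m is a monoid homomorphism Ch_m \<rightarrow> M_N(T), i.e.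
  a monoid homomorphism f from the free monoid on {1..m} (words) which is constant
  on chinese_cong classes of words over {1..m}.\<close>

definition chinese_rep :: "nat \<Rightarrow> (nat list \<Rightarrow> 'n::finite tmat) \<Rightarrow> bool" where
  "chinese_rep m f \<longleftrightarrow>
     f [] = tmat_one \<and>
     (\<forall>u v. set u \<subseteq> {1..m} \<longrightarrow> set v \<subseteq> {1..m} \<longrightarrow> f (u @ v) = tmat_mult (f u) (f v)) \<and>
     (\<forall>u v. set u \<subseteq> {1..m} \<longrightarrow> set v \<subseteq> {1..m} \<longrightarrow> chinese_cong m u v \<longrightarrow> f u = f v)"

end

theory Submission
  imports Defs
begin

text \<open>The defining relations of the Chinese monoid only involve the
  order of the indices, so any weakly monotone map g from {1..m} to {1..n} sends
  relations of Ch_m to relations (or trivial identities) of Ch_n and hence induces a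
  monoid homomorphism Ch_m \<rightarrow> Ch_n. The representation \<rho>_l is \<rho> composed with the
  homomorphism induced by the monotone surjection that identifies l and l + 1.\<close>

lemma chinese_cong_map_mono:
  assumes "chinese_cong m u v"
    and mono: "mono_on {1..m} g" and range: "g ` {1..m} \<subseteq> {1..n}"
  shows "chinese_cong n (map g u) (map g v)"
proof -
  have chain: "1 \<le> g i \<and> g i \<le> g j \<and> g j \<le> g k \<and> g k \<le> n"
    if "1 \<le> i" "i \<le> j" "j \<le> k" "k \<le> m" for i j k
    using that mono range by (auto simp: image_subset_iff intro: mono_onD)
  from assms(1) show ?thesis
  proof (induction rule: chinese_cong.induct)
    case (refl u)
    show ?case by (rule chinese_cong.refl)
  next
    case (sym u v)
    from sym.IH show ?case by (rule chinese_cong.sym)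
  next
    case (trans u v w)
    from trans.IH show ?case by (rule chinese_cong.trans)
  next
    case (rel1 i j k u v)
    then show ?case using chain chinese_cong.rel1 by simp
  next
    case (rel2 i j k u v)
    then show ?case using chain chinese_cong.rel2 by simp
  qed
qed

lemma chinese_rep_comp_map_mono:
  assumes rep: "chinese_rep n \<rho>"
    and mono: "mono_on {1..m} g" and range: "g ` {1..m} \<subseteq> {1..n}"
  shows "chinese_rep m (\<lambda>w. \<rho> (map g w))"
proof -
  have word: "set (map g w) \<subseteq> {1..n}" if "set w \<subseteq> {1..m}" for w
    using that range by auto
  show ?thesis
    unfolding chinese_rep_def
  proof (intro conjI allI impI)
    show "\<rho> (map g []) = tmat_one"
      using rep by (simp add: chinese_rep_def)
  next
    fix u v
    assume "set u \<subseteq> {1..m}" "set v \<subseteq> {1..m}"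
    then show "\<rho> (map g (u @ v)) = tmat_mult (\<rho> (map g u)) (\<rho> (map g v))"
      using rep word by (simp add: chinese_rep_def)
  next
    fix u v
    assume "set u \<subseteq> {1..m}" "set v \<subseteq> {1..m}" "chinese_cong m u v"
    then show "\<rho> (map g u) = \<rho> (map g v)"
      using rep word chinese_cong_map_mono[OF _ mono range]
      by (simp add: chinese_rep_def)
  qed
qed

definition merge_index :: "nat \<Rightarrow> nat \<Rightarrow> nat" where
  "merge_index l j = (if j \<le> l then j else j - 1)"

lemma mono_merge_index: "mono (merge_index l)"
  by (rule monoI) (auto simp: merge_index_def)

lemma merge_index_image:
  assumes "1 \<le> l" "l \<le> n"
  shows "merge_index l ` {1..n + 1} \<subseteq> {1..n}"
  using assms by (auto simp: merge_index_def)

theorem lemma1p1: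
  fixes n :: nat and \<rho> :: "nat list \<Rightarrow> 'n::finite tmat" and l :: nat
  assumes "n \<ge> 1"
    and "chinese_rep n \<rho>"
    and "l \<in> {1..n}"
  shows "\<exists>\<rho>l :: nat list \<Rightarrow> 'n tmat. chinese_rep (n + 1) \<rho>l \<and>
           (\<forall>j\<in>{1..n+1}. \<rho>l [j] = (if j \<le> l then \<rho> [j] else \<rho> [j - 1]))"
proof (intro exI conjI)
  show "chinese_rep (n + 1) (\<lambda>w. \<rho> (map (merge_index l) w))"
    using assms(3)
    by (intro chinese_rep_comp_map_mono[OF assms(2)] mono_merge_index[THEN mono_on_subset]
        merge_index_image) auto
  show "\<forall>j\<in>{1..n+1}. \<rho> (map (merge_index l) [j]) = (if j \<le> l then \<rho> [j] else \<rho> [j - 1])"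
    by (simp add: merge_index_def)
qed

end
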